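(* Let $n\geq 3$ and let $L^B$ be a blow-up of the Boolean lattice $L\cong\mathbf{2}^n$. Then: (1) $V(G^c(L^B)_{SR})=V(G^c(L^B))$; (2) for all $x,y\in V(G^c(L^B)_{SR})$ with $x\neq y$ and $[x]=[y]$, $x$ is adjacent to $y$ in $G^c(L^B)_{SR}$; (3) for all $x,y\in V(G^c(L^B)_{SR})$ with $[x]\neq[y]$, $x$ is adjacent to $y$ in $G^c(L^B)_{SR}$ if and only if $x$ is not adjacent to $y$ in $G^c(L^B)$.
   Context: Blow-up: keep $0,1$ of $L=\mathbf{2}^n$ and replace every $x\in L\setminus\{0,1\}$ by a finite nonempty chain $C_x$; within $C_x$ use the chain order, for $a\in C_x,b\in C_y$, $x\neq y$, put $a\leq b$ iff $x\leq y$ in $L$; $0$ is least and $1$ greatest. For $a$ in a lattice with $0$, $a^\perp=\{b: a\wedge b=0\}$; $x\sim y$ iff $x^\perp=y^\perp$, and $[x]$ is the class of $x$. $Z^*(M)$ is the set of nonzero $a$ with $a\wedge b=0$ for some $b\neq 0$; $G^c(M)$ has vertex set $Z^*(M)$, distinct $a,b$ adjacent iff $a\wedge b\neq 0$. In a connected graph, $u$ is maximally distant from $v$ if $d(v,w)\leq d(u,v)$ for all neighbours $w$ of $u$; mutually maximally distant means each is maximally distant from the other. $G_{SR}$ has as vertices those $u$ mutually maximally distant from some $v$, with distinct vertices adjacent iff mutually maximally distant in $G$. *)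

theory Defs
  imports Main
begin

definition meet_zero :: "'a set \<Rightarrow> ('a \<Rightarrow> 'a \<Rightarrow> bool) \<Rightarrow> 'a \<Rightarrow> 'a \<Rightarrow> 'a \<Rightarrow> bool" where
  "meet_zero M le z a b \<longleftrightarrow> (\<forall>c\<in>M. le c a \<and> le c b \<longrightarrow> c = z)"

definition perp :: "'a set \<Rightarrow> ('a \<Rightarrow> 'a \<Rightarrow> bool) \<Rightarrow> 'a \<Rightarrow> 'a \<Rightarrow> 'a set" where
  "perp M le z a = {b\<in>M. meet_zero M le z a b}"

definition perp_class :: "'a set \<Rightarrow> ('a \<Rightarrow> 'a \<Rightarrow> bool) \<Rightarrow> 'a \<Rightarrow> 'a \<Rightarrow> 'a set" where
  "perp_class M le z x = {y\<in>M. perp M le z y = perp M le z x}"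

definition zdiv :: "'a set \<Rightarrow> ('a \<Rightarrow> 'a \<Rightarrow> bool) \<Rightarrow> 'a \<Rightarrow> 'a set" where
  "zdiv M le z = {a\<in>M. a \<noteq> z \<and> (\<exists>b\<in>M. b \<noteq> z \<and> meet_zero M le z a b)}"

definition gc_adj :: "'a set \<Rightarrow> ('a \<Rightarrow> 'a \<Rightarrow> bool) \<Rightarrow> 'a \<Rightarrow> 'a \<Rightarrow> 'a \<Rightarrow> bool" where
  "gc_adj M le z a b \<longleftrightarrow> a \<in> zdiv M le z \<and> b \<in> zdiv M le z \<and> a \<noteq> b \<and> \<not> meet_zero M le z a b"

definition is_walk :: "'v set \<Rightarrow> ('v \<Rightarrow> 'v \<Rightarrow> bool) \<Rightarrow> 'v list \<Rightarrow> bool" where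
  "is_walk V E p \<longleftrightarrow> p \<noteq> [] \<and> set p \<subseteq> V \<and> (\<forall>i. Suc i < length p \<longrightarrow> E (p ! i) (p ! Suc i))"

text \<open>Graph distance (number of edges of a shortest walk); meaningful in a connected graph.\<close>
definition gdist :: "'v set \<Rightarrow> ('v \<Rightarrow> 'v \<Rightarrow> bool) \<Rightarrow> 'v \<Rightarrow> 'v \<Rightarrow> nat" where
  "gdist V E u v = (LEAST k. \<exists>p. is_walk V E p \<and> hd p = u \<and> last p = v \<and> length p = Suc k)"

definition max_dist :: "'v set \<Rightarrow> ('v \<Rightarrow> 'v \<Rightarrow> bool) \<Rightarrow> 'v \<Rightarrow> 'v \<Rightarrow> bool" where
  "max_dist V E u v \<longleftrightarrow> (\<forall>w\<in>V. E u w \<longrightarrow> gdist V E v w \<le> gdist V E u v)"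

definition mmd :: "'v set \<Rightarrow> ('v \<Rightarrow> 'v \<Rightarrow> bool) \<Rightarrow> 'v \<Rightarrow> 'v \<Rightarrow> bool" where
  "mmd V E u v \<longleftrightarrow> u \<in> V \<and> v \<in> V \<and> max_dist V E u v \<and> max_dist V E v u"

definition sr_vertices :: "'v set \<Rightarrow> ('v \<Rightarrow> 'v \<Rightarrow> bool) \<Rightarrow> 'v set" where
  "sr_vertices V E = {u\<in>V. \<exists>v\<in>V. mmd V E u v}"

definition sr_adj :: "'v set \<Rightarrow> ('v \<Rightarrow> 'v \<Rightarrow> bool) \<Rightarrow> 'v \<Rightarrow> 'v \<Rightarrow> bool" where
  "sr_adj V E u v \<longleftrightarrow> u \<in> sr_vertices V E \<and> v \<in> sr_vertices V E \<and> u \<noteq> v \<and> mmd V E u v"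

text \<open>Element x of 2^n other than 0,1 is replaced by the chain C_x = {Mid x 0 < ... < Mid x (k x - 1)}.\<close>
datatype blow = Bot | Top | Mid "nat set" nat

definition proper_elt :: "nat \<Rightarrow> nat set \<Rightarrow> bool" where
  "proper_elt n x \<longleftrightarrow> x \<subseteq> {0..<n} \<and> x \<noteq> {} \<and> x \<noteq> {0..<n}"

definition blowup :: "nat \<Rightarrow> (nat set \<Rightarrow> nat) \<Rightarrow> blow set" where
  "blowup n k = {Bot, Top} \<union> {Mid x i | x i. proper_elt n x \<and> i < k x}"

fun blow_le :: "blow \<Rightarrow> blow \<Rightarrow> bool" where
  "blow_le Bot _ = True"
| "blow_le _ Top = True"
| "blow_le (Mid x i) (Mid y j) = (if x = y then i \<le> j else x \<subseteq> y)"
| "blow_le _ _ = False"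

end

theory Submission
  imports Defs
begin

text \<open>Two elements of the chains C_x and C_y meet in 0 exactly when x and y are disjoint, so
  G^c(L^B) is the graph on all chain elements in which a \<in> C_x and b \<in> C_y are adjacent iff
  x and y intersect, and [a] is determined by x. For n \<ge> 3 this graph has diameter at most 2:
  with p \<in> x and q \<in> y, every element of C_{p,q} is a common neighbour. In a graph of
  diameter at most 2, distinct non-adjacent vertices are always mutually maximally distant,
  while adjacent vertices are so iff they have the same closed neighbourhood; testing against
  the singleton chains C_{p} shows that this happens iff they lie in the same chain C_x.
  Finally every vertex is non-adjacent to the elements of the chain of its complement.\<close>

lemma is_walk_singleton: "is_walk V E [u] \<longleftrightarrow> u \<in> V"
  by (simp add: is_walk_def)

lemma is_walk_Cons_Cons: "is_walk V E (u # v # p) \<longleftrightarrow> u \<in> V \<and> E u v \<and> is_walk V E (v # p)"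
  by (auto simp: is_walk_def nth_Cons less_Suc_eq_0_disj split: nat.splits)

lemma gdist_le_walk:
  "is_walk V E p \<Longrightarrow> hd p = u \<Longrightarrow> last p = v \<Longrightarrow> length p = Suc d \<Longrightarrow> gdist V E u v \<le> d"
  unfolding gdist_def by (rule Least_le) blast

lemma shortest_walk_exists:
  assumes "is_walk V E p" "hd p = u" "last p = v"
  obtains q where "is_walk V E q" "hd q = u" "last q = v" "length q = Suc (gdist V E u v)"
proof -
  have "\<exists>d p. is_walk V E p \<and> hd p = u \<and> last p = v \<and> length p = Suc d"
    using assms by (metis is_walk_def length_greater_0_conv Suc_pred)
  then have "\<exists>q. is_walk V E q \<and> hd q = u \<and> last q = v \<and> length q = Suc (gdist V E u v)"
    unfolding gdist_def by (rule LeastI_ex)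
  with that show ?thesis by blast
qed

lemma gdist_refl: "u \<in> V \<Longrightarrow> gdist V E u u = 0"
  using gdist_le_walk[of V E "[u]"] by (simp add: is_walk_singleton)

lemma gdist_pos:
  assumes "is_walk V E p" "hd p = u" "last p = v" "u \<noteq> v"
  shows "gdist V E u v \<noteq> 0"
proof
  assume "gdist V E u v = 0"
  with shortest_walk_exists[OF assms(1-3)] obtain a where "a = u" "a = v"
    by (metis length_0_conv length_Suc_conv list.sel(1) last_ConsL)
  with assms(4) show False by simp
qed

lemma gdist_eq_1_imp_edge:
  assumes "is_walk V E p" "hd p = u" "last p = v" "gdist V E u v = 1"
  shows "E u v"
proof -
  obtain q where q: "is_walk V E q" "hd q = u" "last q = v" "length q = Suc (gdist V E u v)"
    by (rule shortest_walk_exists[OF assms(1-3)])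
  then have "length q = 2" using assms(4) by simp
  then obtain a b where "q = [a, b]"
    by (metis One_nat_def Suc_1 length_0_conv length_Suc_conv)
  with q show ?thesis by (auto simp: is_walk_def)
qed

lemma gdist_edge:
  assumes "E u v" "u \<in> V" "v \<in> V" "u \<noteq> v"
  shows "gdist V E u v = 1"
proof -
  have w: "is_walk V E [u, v]" using assms by (simp add: is_walk_Cons_Cons is_walk_singleton)
  show ?thesis using gdist_le_walk[OF w] gdist_pos[OF w] assms(4) by fastforce
qed

lemma gdist_common_neighbour:
  assumes "E u w" "E w v" "\<not> E u v" "u \<in> V" "v \<in> V" "w \<in> V" "u \<noteq> v"
  shows "gdist V E u v = 2"
proof -
  have w: "is_walk V E [u, w, v]" using assms by (simp add: is_walk_Cons_Cons is_walk_singleton)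
  have "gdist V E u v \<le> 2" using gdist_le_walk[OF w] by simp
  moreover have "gdist V E u v \<noteq> 0" using gdist_pos[OF w] assms(7) by simp
  moreover have "gdist V E u v \<noteq> 1" using gdist_eq_1_imp_edge[OF w] assms(3) by auto
  ultimately show ?thesis by linarith
qed

locale diameter_le_2_graph =
  fixes V :: "'v set" and E :: "'v \<Rightarrow> 'v \<Rightarrow> bool"
  assumes edge_vertices: "E u v \<Longrightarrow> u \<in> V \<and> v \<in> V \<and> u \<noteq> v"
    and edge_sym: "E u v \<Longrightarrow> E v u"
    and common_neighbour: "u \<in> V \<Longrightarrow> v \<in> V \<Longrightarrow> u \<noteq> v \<Longrightarrow> \<not> E u v \<Longrightarrow> \<exists>w\<in>V. E u w \<and> E w v"
begin

lemma gdist_adjacent: "E u v \<Longrightarrow> gdist V E u v = 1"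
  using edge_vertices gdist_edge by metis

lemma gdist_nonadjacent:
  assumes "u \<in> V" "v \<in> V" "u \<noteq> v" "\<not> E u v"
  shows "gdist V E u v = 2"
  using common_neighbour[OF assms] gdist_common_neighbour assms by metis

lemma gdist_le_2: "u \<in> V \<Longrightarrow> v \<in> V \<Longrightarrow> gdist V E u v \<le> 2"
  using gdist_refl[of u V E] gdist_adjacent[of u v] gdist_nonadjacent[of u v] by fastforce

lemma mmd_nonadjacent:
  assumes "u \<in> V" "v \<in> V" "u \<noteq> v" "\<not> E u v"
  shows "mmd V E u v"
proof -
  have "\<not> E v u" using assms(4) edge_sym by blast
  then have "gdist V E u v = 2" "gdist V E v u = 2"
    using gdist_nonadjacent assms by auto
  then show ?thesis
    unfolding mmd_def max_dist_def using assms(1,2) gdist_le_2 by auto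
qed

lemma max_dist_adjacent_iff:
  assumes "E u v"
  shows "max_dist V E u v \<longleftrightarrow> (\<forall>w. E u w \<longrightarrow> w = v \<or> E v w)"
proof -
  have "gdist V E v w \<le> 1 \<longleftrightarrow> w = v \<or> E v w" if "w \<in> V" for w
    using that edge_vertices[OF assms] gdist_refl[of v V E] gdist_adjacent[of v w]
      gdist_nonadjacent[of v w] by fastforce
  then show ?thesis
    unfolding max_dist_def gdist_adjacent[OF assms] using edge_vertices by blast
qed

end

lemma perp_class_eq_iff:
  assumes "a \<in> M"
  shows "perp_class M le z a = perp_class M le z b \<longleftrightarrow> perp M le z a = perp M le z b"
proof
  assume "perp_class M le z a = perp_class M le z b"
  moreover have "a \<in> perp_class M le z a" using assms by (simp add: perp_class_def)
  ultimately show "perp M le z a = perp M le z b" by (simp add: perp_class_def)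
qed (simp add: perp_class_def)

fun label :: "blow \<Rightarrow> nat set" where
  "label (Mid x i) = x"
| "label _ = {}"

lemma proper_elt_complement: "proper_elt n x \<Longrightarrow> proper_elt n ({0..<n} - x)"
  by (auto simp: proper_elt_def)

lemma proper_elt_pair: "n \<ge> 3 \<Longrightarrow> p < n \<Longrightarrow> q < n \<Longrightarrow> proper_elt n {p, q}"
  using card_mono[of "{p, q}" "{0..<n}"] card_insert_le_m1[of 2 "{q}" p]
  by (auto simp: proper_elt_def card_insert_if split: if_splits)

lemma mem_blowup_Mid [simp]: "Mid x i \<in> blowup n k \<longleftrightarrow> proper_elt n x \<and> i < k x"
  by (auto simp: blowup_def)

lemma blow_le_Bot [simp]: "blow_le c Bot \<longleftrightarrow> c = Bot"
  by (cases c) auto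

lemma blow_le_refl [simp]: "blow_le c c"
  by (cases c) auto

locale boolean_blowup =
  fixes n :: nat and k :: "nat set \<Rightarrow> nat"
  assumes chains_nonempty: "proper_elt n x \<Longrightarrow> 1 \<le> k x"
begin

abbreviation "B \<equiv> blowup n k"
abbreviation "Z \<equiv> zdiv B blow_le Bot"
abbreviation "adj \<equiv> gc_adj B blow_le Bot"

lemma Mid_0_mem: "proper_elt n x \<Longrightarrow> Mid x 0 \<in> B"
  using chains_nonempty by (simp add: Suc_le_eq)

lemma meet_zero_Mid_iff:
  assumes "Mid x i \<in> B" "Mid y j \<in> B"
  shows "meet_zero B blow_le Bot (Mid x i) (Mid y j) \<longleftrightarrow> x \<inter> y = {}"
proof
  assume mz: "meet_zero B blow_le Bot (Mid x i) (Mid y j)"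
  show "x \<inter> y = {}"
  proof (rule ccontr)
    assume "x \<inter> y \<noteq> {}"
    with assms have "proper_elt n (x \<inter> y)" by (auto simp: proper_elt_def)
    moreover have "blow_le (Mid (x \<inter> y) 0) (Mid x i)" "blow_le (Mid (x \<inter> y) 0) (Mid y j)"
      by auto
    ultimately show False
      using mz Mid_0_mem unfolding meet_zero_def by blast
  qed
next
  assume "x \<inter> y = {}"
  show "meet_zero B blow_le Bot (Mid x i) (Mid y j)"
    unfolding meet_zero_def
  proof (intro ballI impI)
    fix c assume "c \<in> B" "blow_le c (Mid x i) \<and> blow_le c (Mid y j)"
    with \<open>x \<inter> y = {}\<close> show "c = Bot"
      by (cases c) (auto simp: proper_elt_def split: if_splits)
  qed
qed

lemma perp_Mid:
  assumes "Mid x i \<in> B"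
  shows "perp B blow_le Bot (Mid x i) = insert Bot {c \<in> B. \<exists>y j. c = Mid y j \<and> x \<inter> y = {}}"
proof -
  have "meet_zero B blow_le Bot (Mid x i) c \<longleftrightarrow> c = Bot \<or> (\<exists>y j. c = Mid y j \<and> x \<inter> y = {})"
    if "c \<in> B" for c
  proof (cases c)
    case Top
    then have "\<not> meet_zero B blow_le Bot (Mid x i) c"
      using assms unfolding meet_zero_def by force
    then show ?thesis using Top by simp
  qed (use that meet_zero_Mid_iff[OF assms] in \<open>auto simp: meet_zero_def\<close>)
  then show ?thesis
    by (auto simp: perp_def blowup_def)
qed

lemma mem_zdiv_iff: "a \<in> Z \<longleftrightarrow> (\<exists>x i. a = Mid x i \<and> proper_elt n x \<and> i < k x)"
proof
  assume a: "a \<in> Z"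
  then obtain b where b: "b \<in> B" "b \<noteq> Bot" "meet_zero B blow_le Bot a b"
    by (auto simp: zdiv_def)
  have "a \<noteq> Top"
  proof
    assume "a = Top"
    then have "blow_le b a" by (cases b) auto
    with b show False unfolding meet_zero_def by auto
  qed
  with a show "\<exists>x i. a = Mid x i \<and> proper_elt n x \<and> i < k x"
    by (auto simp: zdiv_def blowup_def)
next
  assume "\<exists>x i. a = Mid x i \<and> proper_elt n x \<and> i < k x"
  then obtain x i where a: "a = Mid x i" "proper_elt n x" "i < k x" by blast
  define c where "c = Mid ({0..<n} - x) 0"
  have "c \<in> B" using Mid_0_mem[OF proper_elt_complement[OF a(2)]] by (simp add: c_def)
  moreover have "meet_zero B blow_le Bot a c"
    using meet_zero_Mid_iff \<open>c \<in> B\<close> a by (auto simp: c_def)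
  ultimately show "a \<in> Z" using a by (auto simp: zdiv_def c_def)
qed

lemma Mid_0_zdiv: "proper_elt n x \<Longrightarrow> Mid x 0 \<in> Z"
  using Mid_0_mem by (simp add: mem_zdiv_iff)

lemma zdivE:
  assumes "a \<in> Z"
  obtains x i where "a = Mid x i" "Mid x i \<in> B"
  using assms unfolding mem_zdiv_iff by auto

lemma zdiv_label_proper: "a \<in> Z \<Longrightarrow> proper_elt n (label a)"
  by (auto simp: mem_zdiv_iff)

lemma meet_zero_zdiv_iff:
  "a \<in> Z \<Longrightarrow> b \<in> Z \<Longrightarrow> meet_zero B blow_le Bot a b \<longleftrightarrow> label a \<inter> label b = {}"
  by (elim zdivE) (simp add: meet_zero_Mid_iff)

lemma gc_adj_iff: "adj a b \<longleftrightarrow> a \<in> Z \<and> b \<in> Z \<and> a \<noteq> b \<and> label a \<inter> label b \<noteq> {}"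
  unfolding gc_adj_def using meet_zero_zdiv_iff by blast

lemma perp_class_eq_iff_label:
  assumes a: "a \<in> Z" and b: "b \<in> Z"
  shows "perp_class B blow_le Bot a = perp_class B blow_le Bot b \<longleftrightarrow> label a = label b"
proof -
  have perp_eq: "perp B blow_le Bot c = insert Bot {d \<in> B. \<exists>y j. d = Mid y j \<and> label c \<inter> y = {}}"
    if "c \<in> Z" for c
    using that by (elim zdivE) (simp add: perp_Mid)
  have label_mono: "label a \<subseteq> label b"
    if a: "a \<in> Z" and b: "b \<in> Z" and eq: "perp B blow_le Bot a = perp B blow_le Bot b" for a b
  proof -
    define c where "c = Mid ({0..<n} - label b) 0"
    have "c \<in> B" "label b \<inter> ({0..<n} - label b) = {}"
      using Mid_0_mem[OF proper_elt_complement[OF zdiv_label_proper[OF b]]] by (auto simp: c_def)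
    then have "c \<in> perp B blow_le Bot b"
      unfolding perp_eq[OF b] c_def by blast
    then have "c \<in> perp B blow_le Bot a"
      using eq by simp
    then have "label a \<inter> ({0..<n} - label b) = {}"
      unfolding perp_eq[OF a] c_def by blast
    with zdiv_label_proper[OF a] show ?thesis by (auto simp: proper_elt_def)
  qed
  have "perp B blow_le Bot a = perp B blow_le Bot b \<longleftrightarrow> label a = label b"
  proof
    assume "perp B blow_le Bot a = perp B blow_le Bot b"
    then show "label a = label b"
      using label_mono[OF a b] label_mono[OF b a] by (simp add: subset_antisym)
  qed (simp add: perp_eq[OF a] perp_eq[OF b])
  moreover have "a \<in> B" using a by (simp add: zdiv_def)
  ultimately show ?thesis
    using perp_class_eq_iff by metis
qed

end

locale boolean_blowup_dim3 = boolean_blowup +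
  assumes three_le_n: "3 \<le> n"
begin

sublocale diameter_le_2_graph Z adj
proof
  show "adj u v \<Longrightarrow> u \<in> Z \<and> v \<in> Z \<and> u \<noteq> v" for u v
    by (simp add: gc_adj_iff)
  show "adj u v \<Longrightarrow> adj v u" for u v
    by (auto simp: gc_adj_iff)
  show "\<exists>w\<in>Z. adj u w \<and> adj w v" if uv: "u \<in> Z" "v \<in> Z" "u \<noteq> v" "\<not> adj u v" for u v
  proof -
    have disjoint: "label u \<inter> label v = {}" using uv by (simp add: gc_adj_iff)
    obtain p q where pq: "p \<in> label u" "q \<in> label v" "p < n" "q < n"
      using zdiv_label_proper[OF uv(1)] zdiv_label_proper[OF uv(2)]
      unfolding proper_elt_def by (metis atLeastLessThan_iff ex_in_conv subsetD)
    define w where "w = Mid {p, q} 0"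
    have "w \<in> Z"
      unfolding w_def by (rule Mid_0_zdiv[OF proper_elt_pair[OF three_le_n pq(3,4)]])
    moreover have "w \<noteq> u" "w \<noteq> v" using pq disjoint by (auto simp: w_def)
    ultimately have "adj u w" "adj w v" using uv pq by (auto simp: gc_adj_iff w_def)
    with \<open>w \<in> Z\<close> show ?thesis by blast
  qed
qed

lemma adjacent_max_dist_iff:
  assumes uv: "adj u v"
  shows "max_dist Z adj u v \<longleftrightarrow> label u \<subseteq> label v"
  unfolding max_dist_adjacent_iff[OF uv]
proof
  assume twin: "\<forall>w. adj u w \<longrightarrow> w = v \<or> adj v w"
  show "label u \<subseteq> label v"
  proof
    fix p assume p: "p \<in> label u"
    then have "p < n" using zdiv_label_proper[of u] uv by (auto simp: gc_adj_iff proper_elt_def)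
    define w where "w = Mid {p} 0"
    have "w \<in> Z"
      using Mid_0_zdiv[OF proper_elt_pair[OF three_le_n \<open>p < n\<close> \<open>p < n\<close>]] by (simp add: w_def)
    show "p \<in> label v"
    proof (cases "w = u")
      case True
      then show ?thesis using uv by (auto simp: gc_adj_iff w_def)
    next
      case False
      with \<open>w \<in> Z\<close> p uv have "adj u w" by (auto simp: gc_adj_iff w_def)
      with twin have "w = v \<or> adj v w" by blast
      then show ?thesis by (auto simp: gc_adj_iff w_def)
    qed
  qed
next
  assume "label u \<subseteq> label v"
  then show "\<forall>w. adj u w \<longrightarrow> w = v \<or> adj v w"
    using uv by (auto simp: gc_adj_iff)
qed

lemma adjacent_mmd_iff: "adj u v \<Longrightarrow> mmd Z adj u v \<longleftrightarrow> label u = label v"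
  using adjacent_max_dist_iff[of u v] adjacent_max_dist_iff[of v u] edge_sym edge_vertices
  unfolding mmd_def by blast

lemma exists_mmd_partner:
  assumes "u \<in> Z"
  shows "\<exists>v\<in>Z. mmd Z adj u v"
proof -
  define v where "v = Mid ({0..<n} - label u) 0"
  have proper: "proper_elt n (label u)" by (rule zdiv_label_proper[OF assms])
  then have "v \<in> Z"
    unfolding v_def by (rule Mid_0_zdiv[OF proper_elt_complement])
  moreover have "label u \<inter> label v = {}" by (auto simp: v_def)
  moreover have "label u \<noteq> {}" using proper by (simp add: proper_elt_def)
  ultimately show ?thesis
    using mmd_nonadjacent[OF assms] by (metis gc_adj_iff inf.idem)
qed

end

theorem lemma3p16:
  fixes n :: nat and k :: "nat set \<Rightarrow> nat"
  assumes "n \<ge> 3"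
    and "\<And>x. proper_elt n x \<Longrightarrow> k x \<ge> 1"
  defines "M \<equiv> blowup n k"
  defines "V \<equiv> zdiv M blow_le Bot"
  defines "E \<equiv> gc_adj M blow_le Bot"
  shows "sr_vertices V E = V
    \<and> (\<forall>x\<in>sr_vertices V E. \<forall>y\<in>sr_vertices V E.
           x \<noteq> y \<and> perp_class M blow_le Bot x = perp_class M blow_le Bot y \<longrightarrow> sr_adj V E x y)
    \<and> (\<forall>x\<in>sr_vertices V E. \<forall>y\<in>sr_vertices V E.
           perp_class M blow_le Bot x \<noteq> perp_class M blow_le Bot y \<longrightarrow> (sr_adj V E x y \<longleftrightarrow> \<not> E x y))"
proof -
  interpret boolean_blowup_dim3 n k
    using assms(1,2) by unfold_locales auto
  have vertices: "sr_vertices Z adj = Z"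
    unfolding sr_vertices_def using exists_mmd_partner by blast
  have same_label: "sr_adj Z adj x y"
    if "x \<in> Z" "y \<in> Z" "x \<noteq> y" "label x = label y" for x y
  proof -
    have "adj x y"
      using that zdiv_label_proper[of x] by (auto simp: gc_adj_iff proper_elt_def)
    then show ?thesis
      using that vertices adjacent_mmd_iff by (simp add: sr_adj_def)
  qed
  have different_label: "sr_adj Z adj x y \<longleftrightarrow> \<not> adj x y"
    if "x \<in> Z" "y \<in> Z" "label x \<noteq> label y" for x y
    using that vertices adjacent_mmd_iff[of x y] mmd_nonadjacent[of x y]
    by (auto simp: sr_adj_def)
  show ?thesis
    unfolding M_def V_def E_def vertices
    using same_label different_label perp_class_eq_iff_label by auto
qed

end
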